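(* Let $0<\varepsilon<1/5$ and let $G$ be a bipartite graph on $n$ vertices with partition classes $V_1,V_2$ of equal size, such that $G$ has minimum degree at least $(1-\varepsilon)n/2$. If the edges of $G$ are coloured red and blue and this colouring is not a split colouring, then there are two vertex-disjoint connected matchings of distinct colours (one red, one blue) that together cover all but at most $4\varepsilon n$ vertices of $G$.
   Context: The edge colouring is an arbitrary red/blue assignment. For a bipartite graph with partition classes $U,V$, a red/blue edge colouring is a split colouring if there are partitions $U=A\cup B$ and $V=C\cup D$ (some of these sets may be empty) such that all edges of the graph between $A$ and $C$ and between $B$ and $D$ are blue, and all edges of the graph between $A$ and $D$ and between $B$ and $C$ are red. A monochromatic matching is called connected if all its edges lie in a single connected component of the subgraph formed by the edges of that colour. Matchings may be empty. *)

theory Defs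
  imports Complex_Main "HOL-Library.Disjoint_Sets"
begin

definition bipartite_graph :: "'a set \<Rightarrow> 'a set \<Rightarrow> 'a set set \<Rightarrow> bool" where
  "bipartite_graph V1 V2 E \<longleftrightarrow> finite V1 \<and> finite V2 \<and> V1 \<inter> V2 = {} \<and>
     E \<subseteq> {{u, v} | u v. u \<in> V1 \<and> v \<in> V2}"

definition degree :: "'a set set \<Rightarrow> 'a \<Rightarrow> nat" where
  "degree E u = card {v. {u, v} \<in> E}"

text \<open>A red/blue colouring is given by the set R of red edges; the blue edges are E - R.
  Split colouring with respect to the partition classes U = V1, V = V2.\<close>

definition split_colouring :: "'a set \<Rightarrow> 'a set \<Rightarrow> 'a set set \<Rightarrow> 'a set set \<Rightarrow> bool" where
  "split_colouring V1 V2 E R \<longleftrightarrow>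
     (\<exists>A B C D. A \<union> B = V1 \<and> A \<inter> B = {} \<and> C \<union> D = V2 \<and> C \<inter> D = {} \<and>
        (\<forall>a\<in>A. \<forall>c\<in>C. {a, c} \<in> E \<longrightarrow> {a, c} \<in> E - R) \<and>
        (\<forall>b\<in>B. \<forall>d\<in>D. {b, d} \<in> E \<longrightarrow> {b, d} \<in> E - R) \<and>
        (\<forall>a\<in>A. \<forall>d\<in>D. {a, d} \<in> E \<longrightarrow> {a, d} \<in> R) \<and>
        (\<forall>b\<in>B. \<forall>c\<in>C. {b, c} \<in> E \<longrightarrow> {b, c} \<in> R))"

definition matching :: "'a set set \<Rightarrow> 'a set set \<Rightarrow> bool" where
  "matching F M \<longleftrightarrow> M \<subseteq> F \<and> disjoint M"

text \<open>Adjacency relation of the graph formed by the edge set F; its reflexive-transitive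
  closure is "lies in the same connected component".\<close>

definition adj :: "'a set set \<Rightarrow> ('a \<times> 'a) set" where
  "adj F = {(u, v). {u, v} \<in> F}"

definition connected_matching :: "'a set set \<Rightarrow> 'a set set \<Rightarrow> bool" where
  "connected_matching F M \<longleftrightarrow> matching F M \<and>
     (\<forall>e\<in>M. \<forall>f\<in>M. \<forall>u\<in>e. \<forall>v\<in>f. (u, v) \<in> (adj F)\<^sup>*)"

end

theory Submission
  imports Defs
begin

text \<open>
  Put m = n/2 and \<delta> = \<epsilon>m, so every vertex misses at most \<delta> vertices of the other
  side, and look for a matching whose red edges lie in one red component Cr and whose blue edges
  lie in one blue component Cb. By Hall's theorem with deficiency, either such a matching has
  at least m - 4\<delta> edges, which leaves at most 8\<delta> = 4\<epsilon>n vertices uncovered, or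
  there is a barrier: sets S \<subseteq> V1, T \<subseteq> V2 with |S| + |T| > m + 4\<delta> and no edge
  between them that is red inside Cr or blue inside Cb.

  Some vertex x \<in> V1 has more than 2\<delta> neighbours of one colour, say red; let C be its red
  component, so |V2 \<inter> C| > 2\<delta>. If |V1 \<inter> C| \<le> 2\<delta>, the edges between V1 - C and
  V2 \<inter> C are blue and lie in one blue component meeting both sides in more than 2\<delta>
  vertices, which takes the place of C with the colours swapped. So let C meet both sides in more
  than 2\<delta> vertices. If C misses at most 2\<delta> vertices on each side, every edge of a
  barrier that meets C is blue and avoids Cb, so the barrier lies in one blue component disjoint
  from Cb; two successive barriers (for Cb = {} and then for that component) would be disjoint,
  which their sizes forbid. If C misses more than 2\<delta> vertices on one side only, the blue
  edges leaving C put the vertices of C on the other side into one blue component, so every edge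
  at such a vertex is usable and a greedy matching suffices. If C misses more than 2\<delta>
  vertices on both sides, the edges leaving C form two blue-connected halves, and either a blue
  edge joins them, making the whole graph blue-connected, or the colouring is split.
\<close>

section \<open>Hall's theorem\<close>

definition hall_condition :: "'x set \<Rightarrow> ('x \<Rightarrow> 'y set) \<Rightarrow> bool" where
  "hall_condition X N \<longleftrightarrow> (\<forall>S\<subseteq>X. card S \<le> card (\<Union>(N ` S)))"

lemma hall_condition_subset: "hall_condition X N \<Longrightarrow> S \<subseteq> X \<Longrightarrow> hall_condition S N"
  unfolding hall_condition_def by auto

lemma hall_condition_remove_representative:
  assumes "finite X" "\<forall>x\<in>X. finite (N x)"
    and surplus: "\<forall>S\<subseteq>X. S \<noteq> {} \<longrightarrow> S \<noteq> X \<longrightarrow> card S < card (\<Union>(N ` S))"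
    and "x \<in> X"
  shows "hall_condition (X - {x}) (\<lambda>z. N z - {y})"
  unfolding hall_condition_def
proof (intro allI impI)
  fix S assume S: "S \<subseteq> X - {x}"
  show "card S \<le> card (\<Union>z\<in>S. N z - {y})"
  proof (cases "S = {}")
    case False
    have "card S < card (\<Union>(N ` S))" using surplus S False \<open>x \<in> X\<close> by blast
    moreover have "finite (\<Union>(N ` S))"
      using S assms(1,2) by (meson Diff_subset finite_UN_I finite_subset subsetD)
    then have "card (\<Union>(N ` S)) \<le> card (\<Union>(N ` S) - {y}) + 1"
      using diff_card_le_card_Diff[of "{y}" "\<Union>(N ` S)"] by simp
    moreover have "(\<Union>z\<in>S. N z - {y}) = \<Union>(N ` S) - {y}" by auto
    ultimately show ?thesis by (simp only:)
  qed simp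
qed

lemma hall_condition_remove_critical:
  assumes "finite X" "\<forall>x\<in>X. finite (N x)" "hall_condition X N"
    and "S0 \<subseteq> X" and critical: "card (\<Union>(N ` S0)) \<le> card S0"
  shows "hall_condition (X - S0) (\<lambda>z. N z - \<Union>(N ` S0))"
  unfolding hall_condition_def
proof (intro allI impI)
  fix S assume S: "S \<subseteq> X - S0"
  have "S \<union> S0 \<subseteq> X" using S assms(4) by auto
  then have fin: "finite S" "finite S0" "finite (\<Union>(N ` (S \<union> S0)))"
    using assms(1,2) by (auto intro: finite_subset) (intro finite_UN_I, auto intro: finite_subset)
  have "card S + card S0 = card (S \<union> S0)" using fin S by (subst card_Un_disjoint) auto
  also have "\<dots> \<le> card (\<Union>(N ` (S \<union> S0)))" using assms(3) S \<open>S0 \<subseteq> X\<close>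
    unfolding hall_condition_def by (meson Diff_subset Un_least order_trans)
  also have "\<dots> = card ((\<Union>z\<in>S. N z - \<Union>(N ` S0)) \<union> \<Union>(N ` S0))" by (rule arg_cong[where f = card]) auto
  also have "\<dots> \<le> card (\<Union>z\<in>S. N z - \<Union>(N ` S0)) + card S0"
    using card_Un_le critical by (meson add_left_mono order_trans)
  finally show "card S \<le> card (\<Union>z\<in>S. N z - \<Union>(N ` S0))" by simp
qed

theorem Hall_marriage:
  assumes "finite X" "\<forall>x\<in>X. finite (N x)" "hall_condition X N"
  shows "\<exists>f. inj_on f X \<and> (\<forall>x\<in>X. f x \<in> N x)"
  using assms
proof (induction "card X" arbitrary: X N rule: less_induct)
  case less
  show ?case
  proof (cases "\<forall>S\<subseteq>X. S \<noteq> {} \<longrightarrow> S \<noteq> X \<longrightarrow> card S < card (\<Union>(N ` S))")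
    case surplus: True
    show ?thesis
    proof (cases "X = {}")
      case False
      then obtain x where x: "x \<in> X" by auto
      have "card {x} \<le> card (N x)" using less.prems(3) x unfolding hall_condition_def by auto
      then obtain y where y: "y \<in> N x" by fastforce
      have "card (X - {x}) < card X" using less.prems(1) x by (rule card_Diff1_less)
      then obtain f where f: "inj_on f (X - {x})" "\<forall>z\<in>X - {x}. f z \<in> N z - {y}"
        using less.hyps less.prems(1,2) hall_condition_remove_representative[OF less.prems(1,2) surplus x]
        by (metis DiffD1 finite_Diff)
      have "inj_on (f(x := y)) X" using f x by (auto simp: inj_on_def)
      then show ?thesis using f y by (intro exI[of _ "f(x := y)"]) auto
    qed simp
  next
    case False
    then obtain S0 where S0: "S0 \<subseteq> X" "S0 \<noteq> {}" "S0 \<noteq> X" "card (\<Union>(N ` S0)) \<le> card S0"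
      by (auto simp: not_less)
    have fin: "finite S0" using S0(1) less.prems(1) finite_subset by auto
    obtain f1 where f1: "inj_on f1 S0" "\<forall>z\<in>S0. f1 z \<in> N z"
      using less.hyps[of S0 N] S0 fin less.prems hall_condition_subset
      by (meson psubsetI psubset_card_mono subsetD)
    have "card (X - S0) < card X" using S0(1,2) less.prems(1) by (intro psubset_card_mono) auto
    then obtain f2 where f2: "inj_on f2 (X - S0)" "\<forall>z\<in>X - S0. f2 z \<in> N z - \<Union>(N ` S0)"
      using less.hyps less.prems(1,2) hall_condition_remove_critical[OF less.prems S0(1,4)]
      by (metis DiffD1 finite_Diff)
    define g where "g z = (if z \<in> S0 then f1 z else f2 z)" for z
    have "inj_on g S0" "inj_on g (X - S0)" using f1(1) f2(1) by (auto simp: g_def inj_on_def)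
    moreover have "g ` S0 \<inter> g ` (X - S0) = {}" using f1(2) f2(2) by (auto simp: g_def)
    ultimately have "inj_on g (S0 \<union> (X - S0))" unfolding inj_on_Un by blast
    then show ?thesis using S0(1) f1(2) f2(2) by (intro exI[of _ g]) (auto simp: g_def Un_absorb1)
  qed
qed

corollary Hall_marriage_deficiency:
  fixes N :: "'x \<Rightarrow> 'y set" and d :: nat
  assumes "finite X" "\<forall>x\<in>X. finite (N x)" and deficiency: "\<forall>S\<subseteq>X. card S \<le> card (\<Union>(N ` S)) + d"
  shows "\<exists>A f. A \<subseteq> X \<and> card X \<le> card A + d \<and> inj_on f A \<and> (\<forall>x\<in>A. f x \<in> N x)"
proof -
  define N' :: "'x \<Rightarrow> ('y + nat) set" where "N' x = Inl ` N x \<union> Inr ` {..<d}" for x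
  \<comment> \<open>d dummy representatives, available to everyone, absorb the deficiency\<close>
  have "hall_condition X N'"
    unfolding hall_condition_def
  proof (intro allI impI)
    fix S assume S: "S \<subseteq> X"
    show "card S \<le> card (\<Union>(N' ` S))"
    proof (cases "S = {}")
      case False
      then have "\<Union>(N' ` S) = Inl ` \<Union>(N ` S) \<union> Inr ` {..<d}" by (auto simp: N'_def)
      moreover have "finite (\<Union>(N ` S))" using S assms(1,2) by (auto intro: finite_subset)
      ultimately have "card (\<Union>(N' ` S)) = card (\<Union>(N ` S)) + d"
        by (simp only:) (subst card_Un_disjoint, auto simp: card_image)
      then show ?thesis using deficiency S by simp
    qed simp
  qed
  then obtain g where g: "inj_on g X" "\<forall>x\<in>X. g x \<in> N' x"
    using Hall_marriage[of X N'] assms(1,2) by (auto simp: N'_def)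
  define A where "A = {x\<in>X. isl (g x)}"
  have "card (X - A) = card (g ` (X - A))" using g(1) by (simp add: card_image inj_on_subset)
  also have "\<dots> \<le> card (Inr ` {..<d} :: ('y + nat) set)"
    using g(2) by (intro card_mono) (auto simp: A_def N'_def)
  finally have "card X \<le> card A + d"
    using card_Int_Diff[OF assms(1), of A] by (simp add: card_image A_def Int_def)
  moreover have "inj_on (projl \<circ> g) A" using g(1)
    by (auto simp: A_def inj_on_def) (metis sum.collapse(1))
  moreover have "\<forall>x\<in>A. (projl \<circ> g) x \<in> N x" using g(2) by (auto simp: A_def N'_def)
  ultimately show ?thesis by (intro exI[of _ A] exI[of _ "projl \<circ> g"]) (auto simp: A_def)
qed

section \<open>Connectivity in an edge set\<close>

definition edge_closed :: "'a set set \<Rightarrow> 'a set \<Rightarrow> bool" where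
  "edge_closed Q C \<longleftrightarrow> (\<forall>u v. {u, v} \<in> Q \<longrightarrow> u \<in> C \<longrightarrow> v \<in> C)"

definition linked :: "'a set set \<Rightarrow> 'a set \<Rightarrow> bool" where
  "linked Q C \<longleftrightarrow> (\<forall>u\<in>C. \<forall>v\<in>C. (u, v) \<in> (adj Q)\<^sup>*)"

definition component :: "'a set set \<Rightarrow> 'a \<Rightarrow> 'a set" where
  "component Q u = {v. (u, v) \<in> (adj Q)\<^sup>*}"

lemma rtrancl_adj_sym: "(u, v) \<in> (adj Q)\<^sup>* \<Longrightarrow> (v, u) \<in> (adj Q)\<^sup>*"
proof -
  have "sym (adj Q)" by (auto simp: sym_def adj_def insert_commute)
  then show "(u, v) \<in> (adj Q)\<^sup>* \<Longrightarrow> (v, u) \<in> (adj Q)\<^sup>*" by (blast dest: symD sym_rtrancl)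
qed

lemma edge_rtrancl_adj: "{u, v} \<in> Q \<Longrightarrow> (u, v) \<in> (adj Q)\<^sup>*"
  by (auto simp: adj_def)

lemma edge_closed_edge: "edge_closed Q C \<Longrightarrow> {u, v} \<in> Q \<Longrightarrow> u \<in> C \<or> v \<in> C \<Longrightarrow> u \<in> C \<and> v \<in> C"
  unfolding edge_closed_def by (metis insert_commute)

lemma edge_closed_rtrancl_adj: "(u, v) \<in> (adj Q)\<^sup>* \<Longrightarrow> edge_closed Q C \<Longrightarrow> u \<in> C \<Longrightarrow> v \<in> C"
  by (induction rule: rtrancl_induct) (auto simp: edge_closed_def adj_def)

lemma edge_closed_component: "edge_closed Q (component Q u)"
  unfolding edge_closed_def component_def adj_def by (auto intro: rtrancl_into_rtrancl)

lemma linked_component: "linked Q (component Q u)"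
  unfolding linked_def component_def
proof (intro ballI)
  fix v w assume "v \<in> {v. (u, v) \<in> (adj Q)\<^sup>*}" "w \<in> {v. (u, v) \<in> (adj Q)\<^sup>*}"
  then have "(v, u) \<in> (adj Q)\<^sup>*" "(u, w) \<in> (adj Q)\<^sup>*"
    by (auto intro: rtrancl_adj_sym)
  then show "(v, w) \<in> (adj Q)\<^sup>*" by (rule rtrancl_trans)
qed

lemma linked_subset_component: "linked Q C \<Longrightarrow> u \<in> C \<Longrightarrow> C \<subseteq> component Q u"
  unfolding linked_def component_def by auto

lemma linked_Un:
  assumes "linked Q C" "linked Q D" "u \<in> C" "v \<in> D" "(u, v) \<in> (adj Q)\<^sup>*"
  shows "linked Q (C \<union> D)"
proof -
  have "component Q v \<subseteq> component Q u"
  proof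
    fix w assume "w \<in> component Q v"
    then show "w \<in> component Q u"
      using rtrancl_trans[OF assms(5)] unfolding component_def by simp
  qed
  then have "C \<union> D \<subseteq> component Q u"
    using linked_subset_component[OF assms(1,3)] linked_subset_component[OF assms(2,4)] by blast
  then show ?thesis using linked_component[of Q u] unfolding linked_def by blast
qed

lemma component_disjoint_edge_closed:
  assumes "edge_closed Q C" "u \<notin> C" shows "component Q u \<inter> C = {}"
  using edge_closed_rtrancl_adj[OF rtrancl_adj_sym assms(1)] assms(2)
  unfolding component_def by blast

section \<open>Matchings\<close>

lemma card_covered_le:
  assumes "finite F" "\<forall>e\<in>F. \<exists>z y. z \<notin> Y \<and> y \<in> Y \<and> e = {z, y}"
  shows "card (Y \<inter> \<Union>F) \<le> card F"
proof -
  have "card (Y \<inter> \<Union>F) = card (\<Union>e\<in>F. e \<inter> Y)" by (rule arg_cong[where f = card]) blast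
  also have "\<dots> \<le> (\<Sum>e\<in>F. card (e \<inter> Y))" by (rule card_UN_le[OF assms(1)])
  also have "\<dots> \<le> (\<Sum>e\<in>F. 1)"
  proof (rule sum_mono)
    fix e assume "e \<in> F"
    then obtain z y where "z \<notin> Y" "y \<in> Y" "e = {z, y}" using assms(2) by blast
    then have "e \<inter> Y = {y}" by auto
    then show "card (e \<inter> Y) \<le> 1" by simp
  qed
  finally show ?thesis by simp
qed

lemma card_le_Int_plus_Diff:
  assumes "finite X" "S \<subseteq> X" shows "card S \<le> card (S \<inter> C) + card (X - C)"
proof -
  have "card (S - C) \<le> card (X - C)" using assms by (intro card_mono) auto
  then show ?thesis using card_Int_Diff[of S C] assms finite_subset by fastforce
qed

lemma greedy_matching:
  fixes k :: real
  assumes "finite Z" "finite Y" "Z \<inter> Y = {}" and "\<forall>z\<in>Z. k \<le> card {y\<in>Y. {z, y} \<in> K}"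
  shows "\<exists>F\<subseteq>K. disjoint F \<and> finite F \<and> (\<forall>e\<in>F. \<exists>z\<in>Z. \<exists>y\<in>Y. e = {z, y}) \<and>
    min (card Z) k \<le> card F"
  using assms
proof (induction Z rule: finite_induct)
  case (insert z Z)
  then obtain F where F: "F \<subseteq> K" "disjoint F" "finite F" "\<forall>e\<in>F. \<exists>z\<in>Z. \<exists>y\<in>Y. e = {z, y}"
    "min (card Z) k \<le> card F" by auto
  show ?case
  proof (cases "k \<le> card F")
    case True
    then show ?thesis using F by (intro exI[of _ F]) auto
  next
    case False
    have "\<forall>e\<in>F. \<exists>z y. z \<notin> Y \<and> y \<in> Y \<and> e = {z, y}" using F(4) insert.prems(2) by fastforce
    then have "card (Y \<inter> \<Union>F) \<le> card F" by (rule card_covered_le[OF F(3)])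
    also have "\<dots> < card {y\<in>Y. {z, y} \<in> K}" using False insert.prems(3) by auto
    finally have "\<not> {y\<in>Y. {z, y} \<in> K} \<subseteq> Y \<inter> \<Union>F"
      using insert.prems(1) by (meson card_mono finite_Int not_le)
    then obtain y where y: "y \<in> Y" "{z, y} \<in> K" "y \<notin> \<Union>F" by blast
    have "z \<notin> Y" using insert.prems(2) by blast
    then have "z \<notin> \<Union>F" using F(4) insert.hyps(2) by fastforce
    then have new: "{z, y} \<inter> \<Union>F = {}" using y(3) by blast
    then have "disjoint (insert {z, y} F)" using F(2) by (auto simp: disjoint_def)
    moreover have "card (insert {z, y} F) = card F + 1" using new F(3) by (auto simp: card_insert_if)
    ultimately show ?thesis
      using F y insert.hyps by (intro exI[of _ "insert {z, y} F"]) auto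
  qed
qed simp

lemma disjoint_edges_of_injection:
  assumes "A \<inter> f ` A = {}" "inj_on f A"
  shows "disjoint ((\<lambda>x. {x, f x}) ` A)"
  using assms by (auto simp: disjoint_def inj_on_def)

lemma card_edges_of_injection:
  assumes "A \<inter> f ` A = {}"
  shows "card ((\<lambda>x. {x, f x}) ` A) = card A"
proof (rule card_image)
  show "inj_on (\<lambda>x. {x, f x}) A"
    using assms by (auto simp: inj_on_def doubleton_eq_iff)
qed

section \<open>Pairs of connected matchings and split colourings\<close>

definition admissible_edges :: "'a set set \<Rightarrow> 'a set set \<Rightarrow> 'a set \<Rightarrow> 'a set \<Rightarrow> 'a set set" where
  "admissible_edges R B Cr Cb = {e \<in> R. e \<subseteq> Cr} \<union> {e \<in> B. e \<subseteq> Cb}"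

text \<open>The red and the blue edges of F are the two connected matchings of the theorem.\<close>

definition connected_matching_pair :: "'a set set \<Rightarrow> 'a set set \<Rightarrow> real \<Rightarrow> bool" where
  "connected_matching_pair R B s \<longleftrightarrow> (\<exists>Cr Cb F. linked R Cr \<and> linked B Cb \<and>
     F \<subseteq> admissible_edges R B Cr Cb \<and> disjoint F \<and> finite F \<and> s \<le> card F)"

lemma connected_matching_pairI:
  "linked R Cr \<Longrightarrow> linked B Cb \<Longrightarrow> F \<subseteq> admissible_edges R B Cr Cb \<Longrightarrow> disjoint F \<Longrightarrow>
    finite F \<Longrightarrow> s \<le> real (card F) \<Longrightarrow> connected_matching_pair R B s"
  unfolding connected_matching_pair_def by blast

lemma connected_matching_pair_swap:
  "connected_matching_pair B R s \<Longrightarrow> connected_matching_pair R B s"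
proof -
  assume "connected_matching_pair B R s"
  then obtain Cb Cr F where "linked B Cb" "linked R Cr" "F \<subseteq> admissible_edges B R Cb Cr"
    "disjoint F" "finite F" "s \<le> card F" unfolding connected_matching_pair_def by blast
  moreover have "admissible_edges B R Cb Cr = admissible_edges R B Cr Cb"
    unfolding admissible_edges_def by blast
  ultimately show ?thesis using connected_matching_pairI[of R Cr B Cb F s] by simp
qed

lemma non_admissible_edge_blue:
  assumes "edge_closed R Cr" "edge_closed B Cb" "{u, v} \<in> R \<union> B"
    "{u, v} \<notin> admissible_edges R B Cr Cb" "u \<in> Cr \<or> v \<in> Cr"
  shows "{u, v} \<in> B \<and> u \<notin> Cb \<and> v \<notin> Cb"
  using assms edge_closed_edge[OF assms(1)] edge_closed_edge[OF assms(2)]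
  unfolding admissible_edges_def by blast

text \<open>
  Split colourings with the blue edge set B as a parameter instead of E - R, which makes the
  notion symmetric in the two colours.
\<close>

definition split_colours :: "'a set \<Rightarrow> 'a set \<Rightarrow> 'a set set \<Rightarrow> 'a set set \<Rightarrow> bool" where
  "split_colours X Y R B \<longleftrightarrow> (\<exists>A\<subseteq>X. \<exists>C\<subseteq>Y.
     (\<forall>a\<in>A. \<forall>c\<in>C. {a, c} \<notin> R) \<and> (\<forall>a\<in>X - A. \<forall>c\<in>Y - C. {a, c} \<notin> R) \<and>
     (\<forall>a\<in>A. \<forall>c\<in>Y - C. {a, c} \<notin> B) \<and> (\<forall>a\<in>X - A. \<forall>c\<in>C. {a, c} \<notin> B))"

lemma split_colours_swap_colours:
  assumes "split_colours X Y B R" shows "split_colours X Y R B"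
proof -
  obtain A C where h: "A \<subseteq> X" "C \<subseteq> Y"
    "\<forall>a\<in>A. \<forall>c\<in>C. {a, c} \<notin> B" "\<forall>a\<in>X - A. \<forall>c\<in>Y - C. {a, c} \<notin> B"
    "\<forall>a\<in>A. \<forall>c\<in>Y - C. {a, c} \<notin> R" "\<forall>a\<in>X - A. \<forall>c\<in>C. {a, c} \<notin> R"
    using assms unfolding split_colours_def by blast
  show ?thesis unfolding split_colours_def
    by (rule exI[of _ A], rule conjI, fact, rule exI[of _ "Y - C"]) (use h in \<open>auto simp: double_diff\<close>)
qed

lemma split_colours_swap_sides:
  assumes "split_colours Y X R B" shows "split_colours X Y R B"
proof -
  obtain A C where h: "A \<subseteq> Y" "C \<subseteq> X"
    "\<forall>a\<in>A. \<forall>c\<in>C. {a, c} \<notin> R" "\<forall>a\<in>Y - A. \<forall>c\<in>X - C. {a, c} \<notin> R"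
    "\<forall>a\<in>A. \<forall>c\<in>X - C. {a, c} \<notin> B" "\<forall>a\<in>Y - A. \<forall>c\<in>C. {a, c} \<notin> B"
    using assms unfolding split_colours_def by blast
  have flipped: "\<forall>a\<in>C. \<forall>c\<in>A. {a, c} \<notin> R" "\<forall>a\<in>X - C. \<forall>c\<in>Y - A. {a, c} \<notin> R"
    "\<forall>a\<in>X - C. \<forall>c\<in>A. {a, c} \<notin> B" "\<forall>a\<in>C. \<forall>c\<in>Y - A. {a, c} \<notin> B"
    using h(3-6) by (metis insert_commute)+
  show ?thesis unfolding split_colours_def
    by (rule exI[of _ C], rule conjI, fact, rule exI[of _ A]) (use h flipped in blast)
qed

lemma split_colouring_if_split_colours:
  assumes "split_colours V1 V2 R (E - R)" shows "split_colouring V1 V2 E R"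
proof -
  obtain A C where h: "A \<subseteq> V1" "C \<subseteq> V2"
    "\<forall>a\<in>A. \<forall>c\<in>C. {a, c} \<notin> R" "\<forall>a\<in>V1 - A. \<forall>c\<in>V2 - C. {a, c} \<notin> R"
    "\<forall>a\<in>A. \<forall>c\<in>V2 - C. {a, c} \<notin> E - R" "\<forall>a\<in>V1 - A. \<forall>c\<in>C. {a, c} \<notin> E - R"
    using assms unfolding split_colours_def by blast
  show ?thesis unfolding split_colouring_def
    by (rule exI[of _ A], rule exI[of _ "V1 - A"], rule exI[of _ C], rule exI[of _ "V2 - C"]) (use h in auto)
qed

lemma split_colours_if_no_blue_edge:
  assumes "edge_closed R C"
    and no_blue: "\<forall>u\<in>(X \<inter> C) \<union> (Y - C). \<forall>v\<in>(X - C) \<union> (Y \<inter> C). {u, v} \<notin> B"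
  shows "split_colours X Y R B"
proof -
  have blue_C: "\<forall>a\<in>X \<inter> C. \<forall>c\<in>Y - (Y - C). {a, c} \<notin> B" using no_blue by auto
  have blue_outside: "\<forall>a\<in>X - X \<inter> C. \<forall>c\<in>Y - C. {a, c} \<notin> B"
  proof (intro ballI)
    fix a c assume "a \<in> X - X \<inter> C" "c \<in> Y - C"
    then have "{c, a} \<notin> B" using no_blue by blast
    then show "{a, c} \<notin> B" by (simp add: insert_commute)
  qed
  have red_across: "\<forall>a\<in>X \<inter> C. \<forall>c\<in>Y - C. {a, c} \<notin> R" "\<forall>a\<in>X - X \<inter> C. \<forall>c\<in>Y - (Y - C). {a, c} \<notin> R"
    using edge_closed_edge[OF assms(1)] by auto
  show ?thesis unfolding split_colours_def
    by (rule exI[of _ "X \<inter> C"], rule conjI, rule Int_lower1, rule exI[of _ "Y - C"]) (use blue_C blue_outside red_across in blast)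
qed

section \<open>Dense balanced bipartite graphs\<close>

text \<open>
  The setting of the theorem with m = n/2 and \<delta> = \<epsilon>m. Since the assumptions are
  symmetric in the two sides and in the two colours, each case below need only be proved once.
\<close>

locale dense_balanced_bipartite =
  fixes X Y :: "'a set" and E R B :: "'a set set" and m :: nat and \<delta> :: real
  assumes finite_X: "finite X" and finite_Y: "finite Y" and disjoint_X_Y: "X \<inter> Y = {}"
    and card_X: "card X = m" and card_Y: "card Y = m"
    and edges: "\<forall>e\<in>E. \<exists>x\<in>X. \<exists>y\<in>Y. e = {x, y}"
    and colours: "R \<union> B = E"
    and min_degree: "\<forall>u\<in>X \<union> Y. real m - \<delta> \<le> card {v. {u, v} \<in> E}"
    and delta_nonneg: "0 \<le> \<delta>" and delta_small: "5 * \<delta> < m"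
    and not_split: "\<not> split_colours X Y R B"
begin

lemma swap_sides: "dense_balanced_bipartite Y X E R B m \<delta>"
proof -
  have "\<forall>e\<in>E. \<exists>y\<in>Y. \<exists>x\<in>X. e = {y, x}" using edges by (metis insert_commute)
  then show ?thesis
    using finite_X finite_Y disjoint_X_Y card_X card_Y colours min_degree delta_nonneg delta_small
      not_split split_colours_swap_sides
    unfolding dense_balanced_bipartite_def by (metis Int_commute Un_commute)
qed

lemma swap_colours: "dense_balanced_bipartite X Y E B R m \<delta>"
  using finite_X finite_Y disjoint_X_Y card_X card_Y edges colours min_degree delta_nonneg delta_small
    not_split split_colours_swap_colours
  unfolding dense_balanced_bipartite_def by (metis Un_commute)

lemma neighbour_in_Y: "u \<in> X \<Longrightarrow> {u, v} \<in> E \<Longrightarrow> v \<in> Y"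
  using edges disjoint_X_Y by (fastforce simp: doubleton_eq_iff)

lemma edge_subset: "e \<in> E \<Longrightarrow> e \<subseteq> X \<union> Y"
  using edges by fastforce

lemma card_non_neighbours:
  assumes "u \<in> X" shows "card (Y - {v. {u, v} \<in> E}) \<le> \<delta>"
proof -
  have sub: "{v. {u, v} \<in> E} \<subseteq> Y" using neighbour_in_Y assms by blast
  then have "card (Y - {v. {u, v} \<in> E}) = m - card {v. {u, v} \<in> E}"
    using finite_Y card_Y by (simp add: card_Diff_subset finite_subset)
  moreover have "card {v. {u, v} \<in> E} \<le> m" using sub finite_Y card_Y card_mono by blast
  moreover have "real m - \<delta> \<le> card {v. {u, v} \<in> E}" using min_degree assms by blast
  ultimately show ?thesis by (simp add: of_nat_diff)
qed

lemma has_neighbour: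
  assumes "u \<in> X" "T \<subseteq> Y" "\<delta> < card T" shows "\<exists>t\<in>T. {u, t} \<in> E"
proof (rule ccontr)
  assume "\<not> ?thesis"
  then have "T \<subseteq> Y - {v. {u, v} \<in> E}" using assms(2) by auto
  then have "card T \<le> card (Y - {v. {u, v} \<in> E})" using finite_Y by (meson card_mono finite_Diff)
  then show False using card_non_neighbours[OF assms(1)] assms(3) by linarith
qed

lemma has_common_neighbour:
  assumes "u \<in> X" "u' \<in> X" "T \<subseteq> Y" "2 * \<delta> < card T"
  shows "\<exists>t\<in>T. {u, t} \<in> E \<and> {u', t} \<in> E"
proof (rule ccontr)
  assume "\<not> ?thesis"
  then have "T \<subseteq> (Y - {v. {u, v} \<in> E}) \<union> (Y - {v. {u', v} \<in> E})" using assms(3) by auto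
  then have "card T \<le> card ((Y - {v. {u, v} \<in> E}) \<union> (Y - {v. {u', v} \<in> E}))"
    using finite_Y by (meson card_mono finite_Diff finite_UnI)
  also have "\<dots> \<le> card (Y - {v. {u, v} \<in> E}) + card (Y - {v. {u', v} \<in> E})" by (rule card_Un_le)
  finally show False using card_non_neighbours[OF assms(1)] card_non_neighbours[OF assms(2)] assms(4)
    by linarith
qed

lemma monochromatic_linked:
  assumes "S \<subseteq> X" "T \<subseteq> Y" "\<delta> < card S" "2 * \<delta> < card T"
    and monochromatic: "\<forall>s\<in>S. \<forall>t\<in>T. {s, t} \<in> E \<longrightarrow> {s, t} \<in> Q"
  shows "linked Q (S \<union> T)"
proof -
  obtain s0 where s0: "s0 \<in> S" using assms(3) delta_nonneg by fastforce
  have linked_S: "(s0, s) \<in> (adj Q)\<^sup>*" if s: "s \<in> S" for s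
  proof -
    obtain t where "t \<in> T" "{s0, t} \<in> E" "{s, t} \<in> E"
      using has_common_neighbour[of s0 s T] s0 s assms by blast
    then have "{s0, t} \<in> Q" "{t, s} \<in> Q" using monochromatic s0 s by (auto simp: insert_commute)
    then show ?thesis by (meson edge_rtrancl_adj rtrancl_trans)
  qed
  have linked_T: "(s0, t) \<in> (adj Q)\<^sup>*" if t: "t \<in> T" for t
  proof -
    obtain s where "s \<in> S" "{t, s} \<in> E"
      using dense_balanced_bipartite.has_neighbour[OF swap_sides, of t S] t assms by auto
    then have "{s, t} \<in> Q" using monochromatic t by (auto simp: insert_commute)
    then show ?thesis using linked_S[OF \<open>s \<in> S\<close>] by (meson edge_rtrancl_adj rtrancl_trans)
  qed
  have "S \<union> T \<subseteq> component Q s0" using linked_S linked_T by (auto simp: component_def)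
  then show ?thesis using linked_component[of Q s0] unfolding linked_def by blast
qed

lemma matching_or_barrier:
  assumes "linked R Cr" "linked B Cb" "\<not> connected_matching_pair R B (m - 4 * \<delta>)"
  obtains S T where "S \<subseteq> X" "T \<subseteq> Y" "\<forall>s\<in>S. \<forall>t\<in>T. {s, t} \<notin> admissible_edges R B Cr Cb"
    "m + 4 * \<delta> < card S + card T"
proof -
  define N where "N x = {y \<in> Y. {x, y} \<in> admissible_edges R B Cr Cb}" for x
  define d where "d = nat \<lfloor>4 * \<delta>\<rfloor>"
  have d: "d \<le> 4 * \<delta>" "4 * \<delta> < d + 1" using delta_nonneg by (simp_all add: d_def) linarith+
  have "\<not> (\<forall>S\<subseteq>X. card S \<le> card (\<Union>(N ` S)) + d)"
  proof
    assume deficiency: "\<forall>S\<subseteq>X. card S \<le> card (\<Union>(N ` S)) + d"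
    have "\<forall>x\<in>X. finite (N x)" using finite_Y by (auto simp: N_def)
    then obtain A f where A: "A \<subseteq> X" "card X \<le> card A + d" "inj_on f A" "\<forall>x\<in>A. f x \<in> N x"
      using Hall_marriage_deficiency[OF finite_X _ deficiency] by blast
    define F where "F = (\<lambda>x. {x, f x}) ` A"
    have "A \<inter> f ` A = {}" using A(1,4) disjoint_X_Y by (auto simp: N_def)
    then have "disjoint F" "card F = card A"
      using A(3) disjoint_edges_of_injection card_edges_of_injection unfolding F_def by auto
    moreover have "F \<subseteq> admissible_edges R B Cr Cb" "finite F"
      using A(1,4) finite_X by (auto simp: F_def N_def intro: finite_subset)
    moreover have "m - 4 * \<delta> \<le> card F" using A(2) card_X d \<open>card F = card A\<close> by linarith
    ultimately have "connected_matching_pair R B (m - 4 * \<delta>)"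
      using connected_matching_pairI[OF assms(1,2)] by blast
    then show False using assms(3) by blast
  qed
  then obtain S where S: "S \<subseteq> X" "card (\<Union>(N ` S)) + d < card S" by (auto simp: not_le)
  define T where "T = Y - \<Union>(N ` S)"
  have "\<Union>(N ` S) \<subseteq> Y" by (auto simp: N_def)
  then have "card T = m - card (\<Union>(N ` S))" "card (\<Union>(N ` S)) \<le> m"
    using finite_Y card_Y by (auto simp: T_def card_Diff_subset finite_subset card_mono)
  then have "m + 4 * \<delta> < card S + card T" using S(2) d by (simp add: of_nat_diff)
  moreover have "\<forall>s\<in>S. \<forall>t\<in>T. {s, t} \<notin> admissible_edges R B Cr Cb" by (auto simp: T_def N_def)
  moreover have "T \<subseteq> Y" by (auto simp: T_def)
  ultimately show ?thesis using that[OF S(1)] by blast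
qed

lemma blue_component_of_barrier:
  assumes "edge_closed R C" "card (X - C) \<le> 2 * \<delta>" "card (Y - C) \<le> 2 * \<delta>" "edge_closed B Cb"
    and "S \<subseteq> X" "T \<subseteq> Y" and barrier: "\<forall>s\<in>S. \<forall>t\<in>T. {s, t} \<notin> admissible_edges R B C Cb"
    and "m + 4 * \<delta> < card S + card T"
  obtains D where "edge_closed B D" "linked B D" "D \<inter> Cb = {}" "S \<union> T \<subseteq> D"
proof -
  have "card S \<le> m" "card T \<le> m"
    using assms(5,6) finite_X finite_Y card_X card_Y card_mono by metis+
  then have "4 * \<delta> < card S" "4 * \<delta> < card T" using assms(8) by linarith+
  moreover have "card S \<le> card (S \<inter> C) + card (X - C)" "card T \<le> card (T \<inter> C) + card (Y - C)"
    using card_le_Int_plus_Diff finite_X finite_Y assms(5,6) by blast+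
  ultimately have S_C: "2 * \<delta> < card (S \<inter> C)" and T_C: "2 * \<delta> < card (T \<inter> C)"
    using assms(2,3) by linarith+
  have blue: "{s, t} \<in> B \<and> s \<notin> Cb \<and> t \<notin> Cb"
    if "s \<in> S" "t \<in> T" "{s, t} \<in> E" "s \<in> C \<or> t \<in> C" for s t
    using non_admissible_edge_blue[OF assms(1,4)] barrier colours that by blast
  have linked_S: "linked B (S \<union> (T \<inter> C))"
    using assms(5,6) \<open>4 * \<delta> < card S\<close> T_C delta_nonneg blue
    by (intro monochromatic_linked) auto
  have linked_T: "linked B ((S \<inter> C) \<union> T)"
    using assms(5,6) \<open>4 * \<delta> < card T\<close> S_C delta_nonneg blue
    by (intro monochromatic_linked) auto
  have "S \<inter> C \<noteq> {}" using S_C delta_nonneg by auto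
  then obtain s0 where s0: "s0 \<in> S \<inter> C" by blast
  then have "linked B (S \<union> (T \<inter> C) \<union> ((S \<inter> C) \<union> T))"
    by (intro linked_Un[OF linked_S linked_T, of s0 s0]) auto
  moreover have "S \<union> (T \<inter> C) \<union> ((S \<inter> C) \<union> T) = S \<union> T" by auto
  ultimately have "S \<union> T \<subseteq> component B s0" using s0 by (intro linked_subset_component) auto
  moreover obtain t where "t \<in> T" "{s0, t} \<in> E"
    using has_neighbour[of s0 T] s0 assms(5,6) \<open>4 * \<delta> < card T\<close> delta_nonneg by auto
  then have "s0 \<notin> Cb" using blue s0 by blast
  ultimately show ?thesis
    using that[OF edge_closed_component linked_component component_disjoint_edge_closed[OF assms(4)]]
    by blast
qed

lemma spanning_red_component:
  assumes "edge_closed R C" "linked R C" "card (X - C) \<le> 2 * \<delta>" "card (Y - C) \<le> 2 * \<delta>"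
  shows "connected_matching_pair R B (m - 4 * \<delta>)"
proof (rule ccontr)
  assume no_pair: "\<not> ?thesis"
  have "edge_closed B {}" "linked B {}" by (simp_all add: edge_closed_def linked_def)
  then obtain S T where ST: "S \<subseteq> X" "T \<subseteq> Y"
    "\<forall>s\<in>S. \<forall>t\<in>T. {s, t} \<notin> admissible_edges R B C {}" "m + 4 * \<delta> < card S + card T"
    using matching_or_barrier[OF assms(2) _ no_pair] by blast
  then obtain D where D: "edge_closed B D" "linked B D" "D \<inter> {} = {}" "S \<union> T \<subseteq> D"
    by (rule blue_component_of_barrier[OF assms(1,3,4) \<open>edge_closed B {}\<close>])
  obtain S' T' where ST': "S' \<subseteq> X" "T' \<subseteq> Y"
    "\<forall>s\<in>S'. \<forall>t\<in>T'. {s, t} \<notin> admissible_edges R B C D" "m + 4 * \<delta> < card S' + card T'"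
    by (rule matching_or_barrier[OF assms(2) D(2) no_pair])
  then obtain D' where "edge_closed B D'" "linked B D'" "D' \<inter> D = {}" "S' \<union> T' \<subseteq> D'"
    by (rule blue_component_of_barrier[OF assms(1,3,4) D(1)])
  \<comment> \<open>two disjoint barriers cannot both exceed m + 4\<delta>\<close>
  then have "S \<inter> S' = {}" "T \<inter> T' = {}" using D(4) by auto
  moreover have "finite S" "finite S'" "finite T" "finite T'"
    using ST(1,2) ST'(1,2) finite_X finite_Y finite_subset by blast+
  ultimately have "card S + card S' = card (S \<union> S')" "card T + card T' = card (T \<union> T')"
    by (simp_all add: card_Un_disjoint)
  moreover have "card (S \<union> S') \<le> m" "card (T \<union> T') \<le> m"
    using ST(1,2) ST'(1,2) finite_X finite_Y card_X card_Y by (metis card_mono le_sup_iff)+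
  ultimately show False using ST(4) ST'(4) delta_nonneg by linarith
qed

lemma edge_leaving_red_closed_is_blue:
  "edge_closed R C \<Longrightarrow> {u, v} \<in> E \<Longrightarrow> u \<in> C \<Longrightarrow> v \<notin> C \<Longrightarrow> {u, v} \<in> B"
  using colours edge_closed_edge[of R C u v] by blast

lemma card_X_Int_Diff: "card (X \<inter> C) + card (X - C) = m"
  using card_Int_Diff[OF finite_X] card_X by simp

lemma red_component_nearly_covering_X:
  assumes "edge_closed R C" "linked R C" "2 * \<delta> < card (X \<inter> C)" "card (X - C) \<le> 2 * \<delta>"
    and "2 * \<delta> < card (Y - C)"
  shows "connected_matching_pair R B (m - 4 * \<delta>)"
proof -
  have "X \<inter> C \<noteq> {}" using assms(3) delta_nonneg by auto
  then obtain x0 where x0: "x0 \<in> X \<inter> C" by blast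
  define Cb where "Cb = component B x0"
  have "\<forall>s\<in>X \<inter> C. \<forall>t\<in>Y - C. {s, t} \<in> E \<longrightarrow> {s, t} \<in> B"
    using edge_leaving_red_closed_is_blue[OF assms(1)] by blast
  then have "linked B ((X \<inter> C) \<union> (Y - C))"
    by (rule monochromatic_linked[rotated 4]) (use assms(3,5) delta_nonneg in auto)
  then have X_C: "X \<inter> C \<subseteq> Cb" using linked_subset_component[OF _ UnI1[OF x0]] unfolding Cb_def by blast
  \<comment> \<open>every edge at a vertex of X \<inter> C is admissible, so these vertices keep their full degree\<close>
  have admissible: "{z, y} \<in> admissible_edges R B C Cb" if "z \<in> X \<inter> C" "{z, y} \<in> E" for z y
  proof (cases "{z, y} \<in> R")
    case True
    then show ?thesis using that edge_closed_edge[OF assms(1)] by (auto simp: admissible_edges_def)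
  next
    case False
    then have "{z, y} \<in> B" using that(2) colours by blast
    moreover have "z \<in> Cb" using that(1) X_C by blast
    ultimately have "y \<in> Cb" using edge_closed_edge[OF edge_closed_component[of B x0]] Cb_def by blast
    then show ?thesis using \<open>{z, y} \<in> B\<close> \<open>z \<in> Cb\<close> by (simp add: admissible_edges_def)
  qed
  have degree: "\<forall>z\<in>X \<inter> C. real m - \<delta> \<le> card {y\<in>Y. {z, y} \<in> admissible_edges R B C Cb}"
  proof
    fix z assume z: "z \<in> X \<inter> C"
    have "{v. {z, v} \<in> E} \<subseteq> {y\<in>Y. {z, y} \<in> admissible_edges R B C Cb}"
      using admissible[OF z] neighbour_in_Y z by blast
    then have "card {v. {z, v} \<in> E} \<le> card {y\<in>Y. {z, y} \<in> admissible_edges R B C Cb}"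
      using finite_Y by (intro card_mono) auto
    then show "real m - \<delta> \<le> card {y\<in>Y. {z, y} \<in> admissible_edges R B C Cb}"
      using min_degree z by (meson IntD1 UnI1 of_nat_le_iff order_trans)
  qed
  have "finite (X \<inter> C)" "X \<inter> C \<inter> Y = {}" using finite_X disjoint_X_Y by auto
  then obtain F where F: "F \<subseteq> admissible_edges R B C Cb" "disjoint F" "finite F"
    "min (card (X \<inter> C)) (real m - \<delta>) \<le> card F"
    using greedy_matching[OF _ finite_Y _ degree] by blast
  moreover have "m - 4 * \<delta> \<le> card F"
    using F(4) card_X_Int_Diff[of C] assms(4) delta_nonneg by linarith
  ultimately show ?thesis
    using connected_matching_pairI[OF assms(2) linked_component[of B x0]] unfolding Cb_def by blast
qed

lemma red_component_both_sides_large: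
  assumes "edge_closed R C" "2 * \<delta> < card (X \<inter> C)" "2 * \<delta> < card (Y \<inter> C)"
    and "2 * \<delta> < card (X - C)" "2 * \<delta> < card (Y - C)"
  shows "connected_matching_pair R B (m - 4 * \<delta>)"
proof -
  define P1 where "P1 = (X \<inter> C) \<union> (Y - C)"
  define P2 where "P2 = (X - C) \<union> (Y \<inter> C)"
  have blue: "{u, v} \<in> B" if "{u, v} \<in> E" "u \<in> C \<and> v \<notin> C \<or> u \<notin> C \<and> v \<in> C" for u v
    using that edge_leaving_red_closed_is_blue[OF assms(1)] by (metis insert_commute)
  have "\<forall>s\<in>X \<inter> C. \<forall>t\<in>Y - C. {s, t} \<in> E \<longrightarrow> {s, t} \<in> B" using blue by blast
  then have linked_P1: "linked B P1" unfolding P1_def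
    by (rule monochromatic_linked[rotated 4]) (use assms(2,5) delta_nonneg in auto)
  have "\<forall>s\<in>X - C. \<forall>t\<in>Y \<inter> C. {s, t} \<in> E \<longrightarrow> {s, t} \<in> B" using blue by blast
  then have linked_P2: "linked B P2" unfolding P2_def
    by (rule monochromatic_linked[rotated 4]) (use assms(3,4) delta_nonneg in auto)
  show ?thesis
  proof (cases "\<exists>u\<in>P1. \<exists>v\<in>P2. {u, v} \<in> B")
    case True
    then obtain u v where "u \<in> P1" "v \<in> P2" "{u, v} \<in> B" by blast
    then have "linked B (P1 \<union> P2)" using linked_Un[OF linked_P1 linked_P2] edge_rtrancl_adj by metis
    moreover have "P1 \<union> P2 = X \<union> Y" by (auto simp: P1_def P2_def)
    moreover have "edge_closed B (X \<union> Y)" using colours edge_subset by (auto simp: edge_closed_def)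
    moreover have "X - (X \<union> Y) = {}" "Y - (X \<union> Y) = {}" by auto
    then have "card (X - (X \<union> Y)) \<le> 2 * \<delta>" "card (Y - (X \<union> Y)) \<le> 2 * \<delta>"
      using delta_nonneg by (simp_all only: card.empty of_nat_0)
    ultimately have "connected_matching_pair B R (m - 4 * \<delta>)"
      using dense_balanced_bipartite.spanning_red_component[OF swap_colours, of "X \<union> Y"] by argo
    then show ?thesis by (rule connected_matching_pair_swap)
  next
    case False
    then have "\<forall>u\<in>(X \<inter> C) \<union> (Y - C). \<forall>v\<in>(X - C) \<union> (Y \<inter> C). {u, v} \<notin> B"
      unfolding P1_def P2_def by blast
    then have "split_colours X Y R B" by (rule split_colours_if_no_blue_edge[OF assms(1)])
    then show ?thesis using not_split by blast
  qed
qed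

lemma red_component_large_on_both_sides:
  assumes "edge_closed R C" "linked R C" "2 * \<delta> < card (X \<inter> C)" "2 * \<delta> < card (Y \<inter> C)"
  shows "connected_matching_pair R B (m - 4 * \<delta>)"
proof -
  consider "card (X - C) \<le> 2 * \<delta>" "card (Y - C) \<le> 2 * \<delta>"
    | "card (X - C) \<le> 2 * \<delta>" "2 * \<delta> < card (Y - C)"
    | "2 * \<delta> < card (X - C)" "card (Y - C) \<le> 2 * \<delta>"
    | "2 * \<delta> < card (X - C)" "2 * \<delta> < card (Y - C)" by linarith
  then show ?thesis
  proof cases
    case 1
    then show ?thesis using spanning_red_component[OF assms(1,2)] by blast
  next
    case 2
    then show ?thesis using red_component_nearly_covering_X[OF assms(1,2,3)] by blast
  next
    case 3
    then show ?thesis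
      using dense_balanced_bipartite.red_component_nearly_covering_X[OF swap_sides assms(1,2,4)] by blast
  next
    case 4
    then show ?thesis using red_component_both_sides_large[OF assms(1,3,4)] by blast
  qed
qed

lemma red_neighbourhood_large:
  assumes "x \<in> X" "2 * \<delta> < card {y. {x, y} \<in> R}"
  shows "connected_matching_pair R B (m - 4 * \<delta>)"
proof -
  define D where "D = component R x"
  have D: "edge_closed R D" "linked R D"
    unfolding D_def by (rule edge_closed_component, rule linked_component)
  have "{y. {x, y} \<in> R} \<subseteq> Y \<inter> D"
  proof
    fix y assume "y \<in> {y. {x, y} \<in> R}"
    then have "{x, y} \<in> R" by simp
    then have "y \<in> Y" "y \<in> D"
      using neighbour_in_Y[OF assms(1)] colours edge_rtrancl_adj[of x y R]
      by (auto simp: D_def component_def)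
    then show "y \<in> Y \<inter> D" by blast
  qed
  then have "card {y. {x, y} \<in> R} \<le> card (Y \<inter> D)" using finite_Y by (intro card_mono) auto
  then have Y_D: "2 * \<delta> < card (Y \<inter> D)" using assms(2) by linarith
  show ?thesis
  proof (cases "2 * \<delta> < card (X \<inter> D)")
    case True
    then show ?thesis using red_component_large_on_both_sides[OF D _ Y_D] by blast
  next
    case False
    then have X_D: "2 * \<delta> < card (X - D)"
      using card_X_Int_Diff[of D] delta_small delta_nonneg by linarith
    \<comment> \<open>the edges between X - D and Y \<inter> D are blue, so they lie in a single blue component\<close>
    have "{s, t} \<in> B" if "s \<in> X - D" "t \<in> Y \<inter> D" "{s, t} \<in> E" for s t
      using that edge_leaving_red_closed_is_blue[OF D(1), of t s] by (simp add: insert_commute)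
    then have linked: "linked B ((X - D) \<union> (Y \<inter> D))"
      by (intro monochromatic_linked) (use X_D Y_D delta_nonneg in auto)
    have "card (X - D) \<noteq> 0" using X_D delta_nonneg by auto
    then obtain s0 where "s0 \<in> X - D" by (metis card.empty ex_in_conv)
    then have "(X - D) \<union> (Y \<inter> D) \<subseteq> component B s0"
      by (intro linked_subset_component[OF linked]) blast
    then have "card (X - D) \<le> card (X \<inter> component B s0)" "card (Y \<inter> D) \<le> card (Y \<inter> component B s0)"
      using finite_X finite_Y by (auto intro: card_mono)
    then have "connected_matching_pair B R (m - 4 * \<delta>)"
      using X_D Y_D by (intro dense_balanced_bipartite.red_component_large_on_both_sides[OF swap_colours
          edge_closed_component[of B s0] linked_component[of B s0]]) linarith+
    then show ?thesis by (rule connected_matching_pair_swap)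
  qed
qed

theorem connected_matching_pair_exists: "connected_matching_pair R B (m - 4 * \<delta>)"
proof -
  have "X \<noteq> {}" using card_X delta_small delta_nonneg by auto
  then obtain x where x: "x \<in> X" by blast
  have "{v. {x, v} \<in> E} = {y. {x, y} \<in> R} \<union> {y. {x, y} \<in> B}" using colours by auto
  then have "card {v. {x, v} \<in> E} \<le> card {y. {x, y} \<in> R} + card {y. {x, y} \<in> B}"
    by (simp add: card_Un_le)
  moreover have "real m - \<delta> \<le> card {v. {x, v} \<in> E}" using min_degree x by blast
  ultimately consider "2 * \<delta> < card {y. {x, y} \<in> R}" | "2 * \<delta> < card {y. {x, y} \<in> B}"
    using delta_small delta_nonneg by linarith
  then show ?thesis
  proof cases
    case 1
    then show ?thesis by (rule red_neighbourhood_large[OF x])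
  next
    case 2
    then show ?thesis
      by (rule connected_matching_pair_swap[OF dense_balanced_bipartite.red_neighbourhood_large[OF swap_colours x]])
  qed
qed

end

lemma bipartite_graph_edge:
  assumes "bipartite_graph V1 V2 E" "e \<in> E" shows "e \<subseteq> V1 \<union> V2" "card e = 2"
proof -
  obtain u v where "u \<in> V1" "v \<in> V2" "e = {u, v}" using assms unfolding bipartite_graph_def by blast
  moreover have "u \<noteq> v" using calculation assms(1) unfolding bipartite_graph_def by blast
  ultimately show "e \<subseteq> V1 \<union> V2" "card e = 2" by auto
qed

lemma connected_matching_if_linked:
  assumes "M \<subseteq> Q" "disjoint M" "linked Q C" "\<forall>e\<in>M. e \<subseteq> C"
  shows "connected_matching Q M"
  using assms unfolding connected_matching_def matching_def linked_def by blast

lemma card_Union_matching: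
  assumes "disjoint M" "\<forall>e\<in>M. card e = 2"
  shows "card (\<Union>M) = 2 * card M"
proof -
  have "card (\<Union>M) = (\<Sum>e\<in>M. card e)"
    using assms by (intro card_Union_disjoint) (auto intro: card_ge_0_finite)
  also have "\<dots> = (\<Sum>e\<in>M. 2)" using assms(2) by (intro sum.cong) auto
  finally show ?thesis by simp
qed

lemma connected_matchings_if_connected_matching_pair:
  fixes s :: real
  assumes "bipartite_graph V1 V2 E" "R \<subseteq> E" "connected_matching_pair R (E - R) s"
  shows "\<exists>Mr Mb. connected_matching R Mr \<and> connected_matching (E - R) Mb \<and> \<Union>Mr \<inter> \<Union>Mb = {} \<and>
    real (card ((V1 \<union> V2) - (\<Union>Mr \<union> \<Union>Mb))) \<le> card (V1 \<union> V2) - 2 * s"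
proof -
  obtain Cr Cb F where F: "linked R Cr" "linked (E - R) Cb" "F \<subseteq> admissible_edges R (E - R) Cr Cb"
    "disjoint F" "finite F" "s \<le> card F"
    using assms(3) unfolding connected_matching_pair_def by blast
  have "F \<subseteq> E" using F(3) assms(2) by (auto simp: admissible_edges_def)
  then have edges: "\<forall>e\<in>F. e \<subseteq> V1 \<union> V2 \<and> card e = 2" using bipartite_graph_edge[OF assms(1)] by blast
  have "connected_matching R (F \<inter> R)" "connected_matching (E - R) (F - R)"
    using F(1-4) pairwise_subset[OF F(4)]
    by (auto intro!: connected_matching_if_linked simp: admissible_edges_def)
  moreover have "e \<inter> f = {}" if "e \<in> F \<inter> R" "f \<in> F - R" for e f
    using disjointD[OF F(4)] that by blast
  then have "\<Union>(F \<inter> R) \<inter> \<Union>(F - R) = {}" by blast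
  moreover have "\<Union>(F \<inter> R) \<union> \<Union>(F - R) = \<Union>F" by blast
  moreover have "finite (V1 \<union> V2)" "\<Union>F \<subseteq> V1 \<union> V2"
    using assms(1) edges by (auto simp: bipartite_graph_def)
  then have "card ((V1 \<union> V2) - \<Union>F) = card (V1 \<union> V2) - 2 * card F" "2 * card F \<le> card (V1 \<union> V2)"
    using card_Union_matching[OF F(4)] edges card_mono[of "V1 \<union> V2" "\<Union>F"]
    by (simp_all add: card_Diff_subset finite_subset)
  ultimately show ?thesis using F(6) by (intro exI[of _ "F \<inter> R"] exI[of _ "F - R"]) (auto simp: of_nat_diff)
qed

lemma dense_balanced_bipartite_if_min_degree:
  assumes "bipartite_graph V1 V2 E" "card V1 = card V2" "R \<subseteq> E" "\<not> split_colouring V1 V2 E R"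
    and "\<forall>u \<in> V1 \<union> V2. real (card V1) - \<delta> \<le> degree E u" "0 \<le> \<delta>" "5 * \<delta> < card V1"
  shows "dense_balanced_bipartite V1 V2 E R (E - R) (card V1) \<delta>"
  unfolding dense_balanced_bipartite_def
proof (intro conjI)
  show "\<forall>e\<in>E. \<exists>x\<in>V1. \<exists>y\<in>V2. e = {x, y}" using assms(1) unfolding bipartite_graph_def by blast
  show "\<not> split_colours V1 V2 R (E - R)" using assms(4) split_colouring_if_split_colours by blast
qed (use assms in \<open>auto simp: bipartite_graph_def degree_def\<close>)

theorem lemma4p3:
  fixes V1 V2 :: "'a set" and E R :: "'a set set" and \<epsilon> :: real and n :: nat
  assumes "0 < \<epsilon>" and "\<epsilon> < 1/5"
    and "bipartite_graph V1 V2 E"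
    and "card V1 = card V2"
    and "n = card (V1 \<union> V2)"
    and "\<forall>u \<in> V1 \<union> V2. real (degree E u) \<ge> (1 - \<epsilon>) * real n / 2"
    and "R \<subseteq> E"
    and "\<not> split_colouring V1 V2 E R"
  shows "\<exists>Mr Mb. connected_matching R Mr \<and> connected_matching (E - R) Mb \<and>
           \<Union>Mr \<inter> \<Union>Mb = {} \<and>
           real (card ((V1 \<union> V2) - (\<Union>Mr \<union> \<Union>Mb))) \<le> 4 * \<epsilon> * real n"
proof -
  define m where "m = card V1"
  have n: "n = 2 * m" using assms(3-5) by (simp add: m_def bipartite_graph_def card_Un_disjoint)
  have "connected_matching_pair R (E - R) (m - 4 * (\<epsilon> * m))"
  proof (cases "m = 0")
    case True
    then show ?thesis by (intro connected_matching_pairI[of R "{}" _ "{}" "{}"]) (auto simp: linked_def)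
  next
    case False
    have "(1 - \<epsilon>) * real n / 2 = real m - \<epsilon> * m" using n by (simp add: field_simps)
    then have "\<forall>u \<in> V1 \<union> V2. real m - \<epsilon> * m \<le> degree E u" using assms(6) by metis
    then have "dense_balanced_bipartite V1 V2 E R (E - R) m (\<epsilon> * m)"
      using assms False unfolding m_def by (intro dense_balanced_bipartite_if_min_degree) auto
    then show ?thesis by (rule dense_balanced_bipartite.connected_matching_pair_exists)
  qed
  then obtain Mr Mb where "connected_matching R Mr" "connected_matching (E - R) Mb" "\<Union>Mr \<inter> \<Union>Mb = {}"
    "real (card ((V1 \<union> V2) - (\<Union>Mr \<union> \<Union>Mb))) \<le> card (V1 \<union> V2) - 2 * (m - 4 * (\<epsilon> * m))"
    using connected_matchings_if_connected_matching_pair[OF assms(3,7)] by blast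
  moreover have "real (card (V1 \<union> V2)) - 2 * (m - 4 * (\<epsilon> * m)) = 4 * \<epsilon> * n"
    unfolding assms(5)[symmetric] n by (simp add: algebra_simps)
  ultimately show ?thesis by auto
qed

end
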